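(* Assume (i)–(iii) of the standing assumption below. Say $\mu$ is decomposable if there are constants $\alpha_i$ ($i\in\mathcal I$), $\beta_k$ ($k\in\mathcal K$) with $\mu_{ik}=\alpha_i\beta_k$ for all $(i,k)\in\mathcal J$, normalized so that $\sum_k\beta_k=1$. Then: (1) If $\mu$ is decomposable, $\sum_i\lambda_i/\alpha_i=\sum_k\beta_k=1$. (2) If $\mu$ is decomposable, the unique solution of the dual problem is $y^*_i=\alpha_i^{-1}$, $i\in\mathcal I$, $z^*_k=\beta_k$, $k\in\mathcal K$. (3) If $\mu$ is decomposable and $\mathcal J=\mathcal I\times\mathcal K$, then the LP has multiple optimal solutions. (4) If $I=K=2$ and $\mathcal J=\mathcal I\times\mathcal K$, then the LP has multiple optimal solutions if and only if $\mu$ is decomposable; moreover, the number $M$ of extreme points of $\mathcal S_{\mathrm{LP}}$ is at most $2$.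
   Context: Let $\mathcal I$ (classes) and $\mathcal K$ (servers) be finite sets of cardinalities $I$ and $K$, and let $\mathcal J\subset\mathcal I\times\mathcal K$ (activities) have cardinality $J$. For $i\in\mathcal I$ let $\mathcal J_i=\{(i,k)\in\mathcal J\}$ and for $k\in\mathcal K$ let $\mathcal J^k=\{(i,k)\in\mathcal J\}$. Let $\lambda\in(0,\infty)^I$ and $\mu\in(0,\infty)^{\mathcal J}$. Let $R$ be the $I\times J$ matrix with $R_{ij}=\mu_j$ if $j\in\mathcal J_i$ and $0$ otherwise, and $G$ the $K\times J$ matrix with $G_{kj}=1$ if $j\in\mathcal J^k$ and $0$ otherwise. The LP is: minimize $\rho$ over $(\xi,\rho)\in\mathbb R^J\times\mathbb R$ subject to $R\xi=\lambda$, $G\xi\le\rho 1_K$, $\xi\ge0$. The dual problem is: maximize $y\cdot\lambda$ over $(y,z)\in\mathbb R^I\times\mathbb R^K$ subject to $\sum_k z_k=1$, $yR\le zG$, $z\ge 0$. Standing assumption: (i) the optimal value of the LP is $1$; (ii) letting $\mathcal S_{\mathrm{LP}}=\{\xi:(\xi,1)\text{ is an optimal solution of the LP}\}$, every $\xi\in\mathcal S_{\mathrm{LP}}$ satisfies $(G\xi)_k=1$ for all $k$; (iii) the dual problem has a unique solution $(y^*,z^* )$. *)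

theory Defs
  imports "HOL-Analysis.Analysis"
begin

text \<open>Classes are the elements of the finite type 'i, servers the elements of the finite
  type 'k; activities form a set J of pairs. A primal vector xi in R^J is represented as
  an element of real^('i \<times> 'k) that vanishes outside J.\<close>

definition Rmat :: "('i \<times> 'k) set \<Rightarrow> ('i \<times> 'k \<Rightarrow> real) \<Rightarrow> 'i \<Rightarrow> 'i \<times> 'k \<Rightarrow> real" where
  "Rmat J mu i j = (if j \<in> J \<and> fst j = i then mu j else 0)"

definition Gmat :: "('i \<times> 'k) set \<Rightarrow> 'k \<Rightarrow> 'i \<times> 'k \<Rightarrow> real" where
  "Gmat J k j = (if j \<in> J \<and> snd j = k then 1 else 0)"

definition Rxi :: "('i \<times> 'k) set \<Rightarrow> ('i \<times> 'k \<Rightarrow> real) \<Rightarrow> real ^ ('i::finite \<times> 'k::finite) \<Rightarrow> 'i \<Rightarrow> real" where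
  "Rxi J mu xi i = (\<Sum>j\<in>J. Rmat J mu i j * xi $ j)"

definition Gxi :: "('i \<times> 'k) set \<Rightarrow> real ^ ('i::finite \<times> 'k::finite) \<Rightarrow> 'k \<Rightarrow> real" where
  "Gxi J xi k = (\<Sum>j\<in>J. Gmat J k j * xi $ j)"

definition lp_feasible ::
  "('i::finite \<times> 'k::finite) set \<Rightarrow> ('i \<Rightarrow> real) \<Rightarrow> ('i \<times> 'k \<Rightarrow> real) \<Rightarrow> real ^ ('i \<times> 'k) \<Rightarrow> real \<Rightarrow> bool" where
  "lp_feasible J lam mu xi rho \<longleftrightarrow>
     (\<forall>j. j \<notin> J \<longrightarrow> xi $ j = 0) \<and>
     (\<forall>i. Rxi J mu xi i = lam i) \<and>
     (\<forall>k. Gxi J xi k \<le> rho) \<and>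
     (\<forall>j\<in>J. 0 \<le> xi $ j)"

definition lp_optimal ::
  "('i::finite \<times> 'k::finite) set \<Rightarrow> ('i \<Rightarrow> real) \<Rightarrow> ('i \<times> 'k \<Rightarrow> real) \<Rightarrow> real ^ ('i \<times> 'k) \<Rightarrow> real \<Rightarrow> bool" where
  "lp_optimal J lam mu xi rho \<longleftrightarrow> lp_feasible J lam mu xi rho \<and>
     (\<forall>xi' rho'. lp_feasible J lam mu xi' rho' \<longrightarrow> rho \<le> rho')"

definition S_LP ::
  "('i::finite \<times> 'k::finite) set \<Rightarrow> ('i \<Rightarrow> real) \<Rightarrow> ('i \<times> 'k \<Rightarrow> real) \<Rightarrow> (real ^ ('i \<times> 'k)) set" where
  "S_LP J lam mu = {xi. lp_optimal J lam mu xi 1}"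

definition lp_multiple_optima ::
  "('i::finite \<times> 'k::finite) set \<Rightarrow> ('i \<Rightarrow> real) \<Rightarrow> ('i \<times> 'k \<Rightarrow> real) \<Rightarrow> bool" where
  "lp_multiple_optima J lam mu \<longleftrightarrow>
     (\<exists>xi1 rho1 xi2 rho2. lp_optimal J lam mu xi1 rho1 \<and> lp_optimal J lam mu xi2 rho2 \<and>
        (xi1, rho1) \<noteq> (xi2, rho2))"

definition dual_feasible ::
  "('i::finite \<times> 'k::finite) set \<Rightarrow> ('i \<times> 'k \<Rightarrow> real) \<Rightarrow> ('i \<Rightarrow> real) \<Rightarrow> ('k \<Rightarrow> real) \<Rightarrow> bool" where
  "dual_feasible J mu y z \<longleftrightarrow>
     (\<Sum>k\<in>UNIV. z k) = 1 \<and>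
     (\<forall>j\<in>J. (\<Sum>i\<in>UNIV. y i * Rmat J mu i j) \<le> (\<Sum>k\<in>UNIV. z k * Gmat J k j)) \<and>
     (\<forall>k. 0 \<le> z k)"

definition dual_optimal ::
  "('i::finite \<times> 'k::finite) set \<Rightarrow> ('i \<Rightarrow> real) \<Rightarrow> ('i \<times> 'k \<Rightarrow> real) \<Rightarrow> ('i \<Rightarrow> real) \<Rightarrow> ('k \<Rightarrow> real) \<Rightarrow> bool" where
  "dual_optimal J lam mu y z \<longleftrightarrow> dual_feasible J mu y z \<and>
     (\<forall>y' z'. dual_feasible J mu y' z' \<longrightarrow> (\<Sum>i\<in>UNIV. y' i * lam i) \<le> (\<Sum>i\<in>UNIV. y i * lam i))"

definition decomposable ::
  "('i::finite \<times> 'k::finite) set \<Rightarrow> ('i \<times> 'k \<Rightarrow> real) \<Rightarrow> ('i \<Rightarrow> real) \<Rightarrow> ('k \<Rightarrow> real) \<Rightarrow> bool" where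
  "decomposable J mu alpha beta \<longleftrightarrow>
     (\<forall>i k. (i, k) \<in> J \<longrightarrow> mu (i, k) = alpha i * beta k) \<and> (\<Sum>k\<in>UNIV. beta k) = 1"

end

theory Submission
  imports Defs
begin

text \<open>For decomposable \<open>\<mu>\<close> the pair \<open>(1/\<alpha>, \<beta>)\<close> satisfies every dual constraint with
  equality. Pairing it with a fully loaded optimal \<open>\<xi>\<close> shows that its dual value is
  \<open>\<Sum>\<^sub>k \<beta>\<^sub>k = 1\<close>, the primal value; so once \<open>\<beta> \<ge> 0\<close> it is dual optimal, and uniqueness
  identifies it with \<open>(y\<^sup>*, z\<^sup>*)\<close>. Uniqueness also forces \<open>\<beta> \<ge> 0\<close>: otherwise the
  positive parts of the tight pairs \<open>(1/\<alpha>, \<beta>)\<close> and \<open>(-1/\<alpha>, -\<beta>)\<close> would normalize to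
  two different dual optima.

  When \<open>\<J> = \<I> \<times> \<K>\<close>, the product allocation \<open>\<xi>\<^sub>i\<^sub>k = \<lambda>\<^sub>i/\<alpha>\<^sub>i\<close> is optimal with all
  entries positive, and moving along \<open>s\<^sub>i t\<^sub>k/\<beta>\<^sub>k\<close> with \<open>\<Sum> s = \<Sum> t = 0\<close> changes no
  constraint, which gives a second optimum. For \<open>I = K = 2\<close> the difference of two optima lies
  in the kernel of the constraint matrix; that kernel is at most one-dimensional and is nonzero
  only if \<open>\<mu>\<^sub>1\<^sub>1 \<mu>\<^sub>2\<^sub>2 = \<mu>\<^sub>1\<^sub>2 \<mu>\<^sub>2\<^sub>1\<close>, i.e. only if \<open>\<mu>\<close> is decomposable. Hence
  \<open>S\<^sub>L\<^sub>P\<close> lies on a line and has at most two extreme points.\<close>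

lemma sum_mult_Rmat:
  fixes J :: "('i::finite \<times> 'k) set"
  assumes "j \<in> J"
  shows "(\<Sum>i\<in>UNIV. y i * Rmat J mu i j) = y (fst j) * mu j"
  using assms by (simp add: Rmat_def if_distrib[of "\<lambda>x. y _ * x"] cong: if_cong)

lemma sum_mult_Gmat:
  fixes J :: "('i \<times> 'k::finite) set"
  assumes "j \<in> J"
  shows "(\<Sum>k\<in>UNIV. z k * Gmat J k j) = z (snd j)"
  using assms by (simp add: Gmat_def if_distrib[of "\<lambda>x. z _ * x"] cong: if_cong)

lemma sum_mult_Rxi:
  fixes J :: "('i::finite \<times> 'k::finite) set"
  shows "(\<Sum>i\<in>UNIV. y i * Rxi J mu xi i) = (\<Sum>j\<in>J. y (fst j) * mu j * xi $ j)"
proof -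
  have "(\<Sum>i\<in>UNIV. y i * Rxi J mu xi i) = (\<Sum>j\<in>J. (\<Sum>i\<in>UNIV. y i * Rmat J mu i j) * xi $ j)"
    by (simp add: Rxi_def sum_distrib_left sum_distrib_right sum.swap[of _ UNIV] mult.assoc)
  also have "\<dots> = (\<Sum>j\<in>J. y (fst j) * mu j * xi $ j)"
    by (rule sum.cong) (simp_all add: sum_mult_Rmat)
  finally show ?thesis .
qed

lemma sum_mult_Gxi:
  fixes J :: "('i::finite \<times> 'k::finite) set"
  shows "(\<Sum>k\<in>UNIV. z k * Gxi J xi k) = (\<Sum>j\<in>J. z (snd j) * xi $ j)"
proof -
  have "(\<Sum>k\<in>UNIV. z k * Gxi J xi k) = (\<Sum>j\<in>J. (\<Sum>k\<in>UNIV. z k * Gmat J k j) * xi $ j)"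
    by (simp add: Gxi_def sum_distrib_left sum_distrib_right sum.swap[of _ UNIV] mult.assoc)
  also have "\<dots> = (\<Sum>j\<in>J. z (snd j) * xi $ j)"
    by (rule sum.cong) (simp_all add: sum_mult_Gmat)
  finally show ?thesis .
qed

lemma weak_duality:
  assumes "lp_feasible J lam mu xi rho" and "dual_feasible J mu y z"
  shows "(\<Sum>i\<in>UNIV. y i * lam i) \<le> rho"
proof -
  have "(\<Sum>i\<in>UNIV. y i * lam i) = (\<Sum>j\<in>J. y (fst j) * mu j * xi $ j)"
    using assms(1) by (simp add: lp_feasible_def flip: sum_mult_Rxi)
  also have "\<dots> \<le> (\<Sum>j\<in>J. z (snd j) * xi $ j)"
    using assms by (intro sum_mono mult_right_mono)
      (auto simp: lp_feasible_def dual_feasible_def sum_mult_Rmat sum_mult_Gmat)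
  also have "\<dots> = (\<Sum>k\<in>UNIV. z k * Gxi J xi k)"
    by (simp add: sum_mult_Gxi)
  also have "\<dots> \<le> (\<Sum>k\<in>UNIV. z k * rho)"
    using assms by (intro sum_mono mult_left_mono) (auto simp: lp_feasible_def dual_feasible_def)
  also have "\<dots> = rho"
    using assms(2) by (simp add: dual_feasible_def flip: sum_distrib_right)
  finally show ?thesis .
qed

text \<open>\<open>(yR)\<^sub>j = (zG)\<^sub>j\<close> for every activity \<open>j\<close>: all dual constraints hold with equality.\<close>

definition dual_tight :: "('i \<times> 'k) set \<Rightarrow> ('i \<times> 'k \<Rightarrow> real) \<Rightarrow> ('i \<Rightarrow> real) \<Rightarrow> ('k \<Rightarrow> real) \<Rightarrow> bool"
  where "dual_tight J mu y z \<longleftrightarrow> (\<forall>j\<in>J. y (fst j) * mu j = z (snd j))"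

lemma dual_feasible_if_tight:
  fixes J :: "('i::finite \<times> 'k::finite) set"
  assumes "dual_tight J mu y z" "\<forall>k. 0 \<le> z k" "(\<Sum>k\<in>UNIV. z k) = 1"
  shows "dual_feasible J mu y z"
  using assms by (simp add: dual_feasible_def dual_tight_def sum_mult_Rmat sum_mult_Gmat)

lemma dual_value_if_tight:
  assumes "\<forall>i. Rxi J mu xi i = lam i" "\<forall>k. Gxi J xi k = 1" "dual_tight J mu y z"
  shows "(\<Sum>i\<in>UNIV. y i * lam i) = (\<Sum>k\<in>UNIV. z k)"
proof -
  have "(\<Sum>i\<in>UNIV. y i * lam i) = (\<Sum>j\<in>J. y (fst j) * mu j * xi $ j)"
    using assms(1) by (simp flip: sum_mult_Rxi)
  also have "\<dots> = (\<Sum>j\<in>J. z (snd j) * xi $ j)"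
    using assms(3) by (simp add: dual_tight_def)
  also have "\<dots> = (\<Sum>k\<in>UNIV. z k)"
    using assms(2) by (simp flip: sum_mult_Gxi)
  finally show ?thesis .
qed

lemma dual_tight_positive_part:
  assumes "\<forall>j\<in>J. 0 < mu j" "dual_tight J mu y z"
  shows "dual_tight J mu (\<lambda>i. max 0 (y i) / c) (\<lambda>k. max 0 (z k) / c)"
  using assms by (auto simp: dual_tight_def max_mult_distrib_right less_imp_le)

lemma decomposable_dual_tight:
  assumes "\<forall>j\<in>J. 0 < mu j" "decomposable J mu alpha beta"
  shows "dual_tight J mu (\<lambda>i. 1 / alpha i) beta"
proof -
  have "1 / alpha i * mu (i, k) = beta k" if "(i, k) \<in> J" for i k
  proof -
    have "mu (i, k) = alpha i * beta k" "0 < mu (i, k)"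
      using assms that by (auto simp: decomposable_def)
    then show ?thesis by auto
  qed
  then show ?thesis by (auto simp: dual_tight_def)
qed

definition constraint_kernel :: "('i::finite \<times> 'k::finite) set \<Rightarrow> ('i \<times> 'k \<Rightarrow> real) \<Rightarrow> real ^ ('i \<times> 'k) \<Rightarrow> bool"
  where "constraint_kernel J mu d \<longleftrightarrow>
    (\<forall>j. j \<notin> J \<longrightarrow> d $ j = 0) \<and> (\<forall>i. Rxi J mu d i = 0) \<and> (\<forall>k. Gxi J d k = 0)"

lemma Rxi_add: "Rxi J mu (x + y) i = Rxi J mu x i + Rxi J mu y i"
  by (simp add: Rxi_def distrib_left sum.distrib)

lemma Rxi_diff: "Rxi J mu (x - y) i = Rxi J mu x i - Rxi J mu y i"
  by (simp add: Rxi_def right_diff_distrib sum_subtractf)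

lemma Rxi_scaleR: "Rxi J mu (c *\<^sub>R x) i = c * Rxi J mu x i"
  by (simp add: Rxi_def sum_distrib_left algebra_simps)

lemma Gxi_add: "Gxi J (x + y) k = Gxi J x k + Gxi J y k"
  by (simp add: Gxi_def distrib_left sum.distrib)

lemma Gxi_diff: "Gxi J (x - y) k = Gxi J x k - Gxi J y k"
  by (simp add: Gxi_def right_diff_distrib sum_subtractf)

lemma Gxi_scaleR: "Gxi J (c *\<^sub>R x) k = c * Gxi J x k"
  by (simp add: Gxi_def sum_distrib_left algebra_simps)

lemma constraint_kernel_diff:
  "constraint_kernel J mu d \<Longrightarrow> constraint_kernel J mu e \<Longrightarrow> constraint_kernel J mu (d - e)"
  by (simp add: constraint_kernel_def Rxi_diff Gxi_diff)

lemma constraint_kernel_scaleR: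
  "constraint_kernel J mu d \<Longrightarrow> constraint_kernel J mu (c *\<^sub>R d)"
  by (simp add: constraint_kernel_def Rxi_scaleR Gxi_scaleR)

lemma lp_feasible_add_kernel:
  assumes "lp_feasible J lam mu x rho" "constraint_kernel J mu d" "\<forall>j\<in>J. 0 \<le> x $ j + d $ j"
  shows "lp_feasible J lam mu (x + d) rho"
  using assms by (simp add: lp_feasible_def constraint_kernel_def Rxi_add Gxi_add)

lemma exists_pos_perturbation_nonneg:
  fixes x d :: "'a::finite \<Rightarrow> real"
  assumes "\<forall>j. 0 < x j"
  obtains \<epsilon> where "0 < \<epsilon>" "\<forall>j. 0 \<le> x j + \<epsilon> * d j"
proof -
  have "\<forall>\<^sub>F \<epsilon> in at_right 0. 0 < x j + \<epsilon> * d j" for j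
  proof -
    have "((\<lambda>\<epsilon>. x j + \<epsilon> * d j) \<longlongrightarrow> x j + 0 * d j) (at_right 0)"
      by (intro tendsto_intros)
    then show ?thesis
      using assms by (simp add: order_tendstoD(1))
  qed
  then have "\<forall>\<^sub>F \<epsilon> in at_right 0. 0 < \<epsilon> \<and> (\<forall>j. 0 < x j + \<epsilon> * d j)"
    by (intro eventually_conj eventually_at_right_less eventually_all_finite)
  then obtain \<epsilon> where "0 < \<epsilon>" "\<forall>j. 0 < x j + \<epsilon> * d j"
    using eventually_happens'[OF trivial_limit_at_right_real] by blast
  then show ?thesis
    using that less_imp_le by blast
qed

lemma Rxi_UNIV: "Rxi UNIV mu xi i = (\<Sum>k\<in>UNIV. mu (i, k) * xi $ (i, k))"
proof -
  have "Rxi UNIV mu xi i = (\<Sum>(i', k)\<in>UNIV \<times> UNIV. Rmat UNIV mu i (i', k) * xi $ (i', k))"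
    by (simp add: Rxi_def UNIV_Times_UNIV)
  also have "\<dots> = (\<Sum>i'\<in>UNIV. \<Sum>k\<in>UNIV. Rmat UNIV mu i (i', k) * xi $ (i', k))"
    by (rule sum.cartesian_product[symmetric])
  also have "\<dots> = (\<Sum>k\<in>UNIV. mu (i, k) * xi $ (i, k))"
    by (simp add: Rmat_def if_distrib[of "\<lambda>x. x * _"] sum.swap[of _ UNIV UNIV] cong: if_cong)
  finally show ?thesis .
qed

lemma Gxi_UNIV: "Gxi UNIV xi k = (\<Sum>i\<in>UNIV. xi $ (i, k))"
proof -
  have "Gxi UNIV xi k = (\<Sum>(i, k')\<in>UNIV \<times> UNIV. Gmat UNIV k (i, k') * xi $ (i, k'))"
    by (simp add: Gxi_def UNIV_Times_UNIV)
  also have "\<dots> = (\<Sum>i\<in>UNIV. \<Sum>k'\<in>UNIV. Gmat UNIV k (i, k') * xi $ (i, k'))"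
    by (rule sum.cartesian_product[symmetric])
  also have "\<dots> = (\<Sum>i\<in>UNIV. xi $ (i, k))"
    by (simp add: Gmat_def if_distrib[of "\<lambda>x. x * _"] cong: if_cong)
  finally show ?thesis .
qed

lemma decomposable_product_form_feasible:
  assumes dec: "decomposable UNIV mu alpha beta"
    and "\<forall>i. alpha i \<noteq> 0" "\<forall>i. 0 \<le> lam i / alpha i" "(\<Sum>i\<in>UNIV. lam i / alpha i) = 1"
  shows "lp_feasible UNIV lam mu (\<chi> j. lam (fst j) / alpha (fst j)) 1"
proof -
  have "Rxi UNIV mu (\<chi> j. lam (fst j) / alpha (fst j)) i = lam i" for i
  proof -
    have "Rxi UNIV mu (\<chi> j. lam (fst j) / alpha (fst j)) i = (\<Sum>k\<in>UNIV. lam i * beta k)"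
      using dec assms(2) by (simp add: Rxi_UNIV decomposable_def mult.commute)
    also have "\<dots> = lam i"
      using dec by (simp add: decomposable_def flip: sum_distrib_left)
    finally show ?thesis .
  qed
  then show ?thesis
    using assms by (simp add: lp_feasible_def Gxi_UNIV)
qed

lemma decomposable_kernel_direction:
  assumes dec: "decomposable UNIV mu alpha beta"
    and "\<forall>k. beta k \<noteq> 0" "(\<Sum>i\<in>UNIV. s i) = 0" "(\<Sum>k\<in>UNIV. t k) = 0"
  shows "constraint_kernel UNIV mu (\<chi> j. s (fst j) * t (snd j) / beta (snd j))"
proof -
  have "Rxi UNIV mu (\<chi> j. s (fst j) * t (snd j) / beta (snd j)) i = 0" for i
  proof -
    have "Rxi UNIV mu (\<chi> j. s (fst j) * t (snd j) / beta (snd j)) i = (\<Sum>k\<in>UNIV. alpha i * s i * t k)"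
      using dec assms(2) by (simp add: Rxi_UNIV decomposable_def mult.assoc)
    also have "\<dots> = 0"
      using assms(4) by (simp flip: sum_distrib_left)
    finally show ?thesis .
  qed
  moreover have "Gxi UNIV (\<chi> j. s (fst j) * t (snd j) / beta (snd j)) k = (\<Sum>i\<in>UNIV. s i) * t k / beta k" for k
    by (simp add: Gxi_UNIV sum_distrib_right sum_divide_distrib)
  ultimately show ?thesis
    using assms(3) by (simp add: constraint_kernel_def)
qed

lemma constraint_kernel_2x2:
  fixes mu :: "'i::finite \<times> 'k::finite \<Rightarrow> real"
  assumes I: "UNIV = {i1, i2}" "i1 \<noteq> i2" and K: "UNIV = {k1, k2}" "k1 \<noteq> k2"
    and mu_pos: "\<forall>j. 0 < mu j" and d: "constraint_kernel UNIV mu d"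
  shows "d $ (i1, k1) = 0 \<Longrightarrow> d = 0"
    and "d \<noteq> 0 \<Longrightarrow> mu (i1, k1) * mu (i2, k2) = mu (i1, k2) * mu (i2, k1)"
proof -
  have R: "mu (i, k1) * d $ (i, k1) + mu (i, k2) * d $ (i, k2) = 0" for i
  proof -
    have "(\<Sum>k\<in>UNIV. mu (i, k) * d $ (i, k)) = 0"
      using d by (simp add: constraint_kernel_def Rxi_UNIV)
    then show ?thesis
      unfolding K(1) using K(2) by simp
  qed
  have G: "d $ (i2, k) = - d $ (i1, k)" for k
  proof -
    have "(\<Sum>i\<in>UNIV. d $ (i, k)) = 0"
      using d by (simp add: constraint_kernel_def Gxi_UNIV)
    then show ?thesis
      unfolding I(1) using I(2) by (simp add: eq_neg_iff_add_eq_0 add.commute)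
  qed
  have indices: "(i = i1 \<or> i = i2) \<and> (k = k1 \<or> k = k2)" for i k
    using I K by blast
  show zero: "d = 0" if "d $ (i1, k1) = 0"
  proof -
    have "d $ (i1, k2) = 0"
      using R[of i1] that mu_pos by (metis less_irrefl mult_eq_0_iff add_0)
    then have "d $ (i, k) = 0" for i k
      using indices[of i k] that G by auto
    then show ?thesis
      by (simp add: vec_eq_iff split_paired_All)
  qed
  show "mu (i1, k1) * mu (i2, k2) = mu (i1, k2) * mu (i2, k1)" if "d \<noteq> 0"
  proof -
    have "(mu (i1, k1) * mu (i2, k2) - mu (i1, k2) * mu (i2, k1)) * d $ (i1, k1)
        = mu (i2, k2) * (mu (i1, k1) * d $ (i1, k1) + mu (i1, k2) * d $ (i1, k2))
          + mu (i1, k2) * (mu (i2, k1) * d $ (i2, k1) + mu (i2, k2) * d $ (i2, k2))"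
      by (simp add: G algebra_simps)
    also have "\<dots> = 0"
      by (simp add: R)
    finally show ?thesis
      using zero that by auto
  qed
qed

lemma decomposable_2x2:
  fixes mu :: "'i::finite \<times> 'k::finite \<Rightarrow> real"
  assumes I: "UNIV = {i1, i2}" and K: "UNIV = {k1, k2}" "k1 \<noteq> k2"
    and mu_pos: "\<forall>j. 0 < mu j" and det: "mu (i1, k1) * mu (i2, k2) = mu (i1, k2) * mu (i2, k1)"
  shows "decomposable UNIV mu (\<lambda>i. mu (i, k1) + mu (i, k2)) (\<lambda>k. mu (i1, k) / (mu (i1, k1) + mu (i1, k2)))"
proof -
  have pos: "0 < mu (i1, k1) + mu (i1, k2)"
    using mu_pos by (simp add: add_pos_pos)
  have "mu (i, k) * (mu (i1, k1) + mu (i1, k2)) = (mu (i, k1) + mu (i, k2)) * mu (i1, k)" for i k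
  proof -
    have "(i = i1 \<or> i = i2) \<and> (k = k1 \<or> k = k2)"
      using I K by blast
    then show ?thesis
      using det by (auto simp: algebra_simps)
  qed
  moreover have "(\<Sum>k\<in>UNIV. mu (i1, k) / (mu (i1, k1) + mu (i1, k2))) = 1"
    unfolding K(1) using K(2) pos by (simp add: add_divide_distrib[symmetric])
  ultimately show ?thesis
    using pos by (simp add: decomposable_def field_simps)
qed

lemma extreme_point_not_between:
  fixes p d :: "'a::real_vector"
  assumes "ta < tb" "tb < tc" "d \<noteq> 0" "p + ta *\<^sub>R d \<in> S" "p + tc *\<^sub>R d \<in> S"
  shows "\<not> (p + tb *\<^sub>R d) extreme_point_of S"
proof -
  define u where "u = (tb - ta) / (tc - ta)"
  have u: "0 < u" "u < 1"
    using assms by (auto simp: u_def divide_less_eq)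
  have "u * (tc - ta) = tb - ta"
    using assms by (simp add: u_def)
  then have "(1 - u) * ta + u * tc = tb"
    by (simp add: algebra_simps)
  then have "p + tb *\<^sub>R d = (1 - u) *\<^sub>R (p + ta *\<^sub>R d) + u *\<^sub>R (p + tc *\<^sub>R d)"
    by (simp add: algebra_simps flip: scaleR_add_left)
  moreover have "p + ta *\<^sub>R d \<noteq> p + tc *\<^sub>R d"
    using assms by simp
  ultimately have "p + tb *\<^sub>R d \<in> open_segment (p + ta *\<^sub>R d) (p + tc *\<^sub>R d)"
    using u unfolding in_segment by blast
  then show ?thesis
    using assms unfolding extreme_point_of_def by blast
qed

lemma finite_card_le_2_if_no_three_distinct:
  assumes "\<And>x y z. x \<in> E \<Longrightarrow> y \<in> E \<Longrightarrow> z \<in> E \<Longrightarrow> x \<noteq> y \<Longrightarrow> y \<noteq> z \<Longrightarrow> x = z"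
  shows "finite E \<and> card E \<le> 2"
proof (rule ccontr)
  assume "\<not> (finite E \<and> card E \<le> 2)"
  then obtain F where "F \<subseteq> E" "card F = 3"
    by (metis infinite_arbitrarily_large not_less_eq_eq numeral_3_eq_3 numeral_2_eq_2
        obtain_subset_with_card_n)
  then obtain x y z where "{x, y, z} \<subseteq> E" "x \<noteq> y" "y \<noteq> z" "x \<noteq> z"
    by (auto simp: card_3_iff)
  then show False
    using assms by blast
qed

lemma extreme_points_on_line:
  fixes p d :: "'a::real_vector"
  assumes S: "S \<subseteq> range (\<lambda>t. p + t *\<^sub>R d)"
  shows "finite {x. x extreme_point_of S} \<and> card {x. x extreme_point_of S} \<le> 2"
proof (rule finite_card_le_2_if_no_three_distinct, unfold mem_Collect_eq)
  fix x y z
  assume ext: "x extreme_point_of S" "y extreme_point_of S" "z extreme_point_of S"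
    and "x \<noteq> y" "y \<noteq> z"
  then have "x \<in> S" "y \<in> S" "z \<in> S"
    by (auto simp: extreme_point_of_def)
  then obtain tx ty tz where t: "x = p + tx *\<^sub>R d" "y = p + ty *\<^sub>R d" "z = p + tz *\<^sub>R d"
    using S by blast
  with \<open>x \<noteq> y\<close> \<open>y \<noteq> z\<close> have "d \<noteq> 0" "tx \<noteq> ty" "ty \<noteq> tz"
    by auto
  have not_between: "\<not> (ta < tb \<and> tb < tc)"
    if "p + ta *\<^sub>R d \<in> {x, y, z}" "p + tb *\<^sub>R d \<in> {x, y, z}" "p + tc *\<^sub>R d \<in> {x, y, z}" for ta tb tc
    using extreme_point_not_between[of ta tb tc d p S] \<open>d \<noteq> 0\<close> that ext
    by (auto simp: extreme_point_of_def)
  have "tx = tz"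
    using \<open>tx \<noteq> ty\<close> \<open>ty \<noteq> tz\<close> not_between[of tx ty tz] not_between[of tz ty tx]
      not_between[of ty tx tz] not_between[of tz tx ty] not_between[of ty tz tx] not_between[of tx tz ty]
    unfolding t by auto
  then show "x = z"
    using t by simp
qed

lemma obtain_two_distinct:
  assumes "2 \<le> CARD('a::finite)"
  obtains x y :: "'a::finite" where "x \<noteq> y"
  using assms card_le_Suc0_iff_eq[of "UNIV :: 'a set"] by force

locale standing_assumption =
  fixes J :: "('i::finite \<times> 'k::finite) set"
    and lam :: "'i \<Rightarrow> real" and mu :: "'i \<times> 'k \<Rightarrow> real"
  assumes lam_pos: "\<forall>i. 0 < lam i"
    and mu_pos: "\<forall>j\<in>J. 0 < mu j"
    and opt_val: "\<exists>xi. lp_optimal J lam mu xi 1"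
    and full_load: "\<forall>xi\<in>S_LP J lam mu. \<forall>k. Gxi J xi k = 1"
    and dual_unique: "\<exists>!yz. dual_optimal J lam mu (fst yz) (snd yz)"
begin

lemma lp_optimal_iff: "lp_optimal J lam mu xi rho \<longleftrightarrow> lp_feasible J lam mu xi rho \<and> rho = 1"
  using opt_val unfolding lp_optimal_def by (auto intro: order.antisym)

lemma S_LP_eq: "S_LP J lam mu = {xi. lp_feasible J lam mu xi 1}"
  by (simp add: S_LP_def lp_optimal_iff)

lemma lp_multiple_optima_iff:
  "lp_multiple_optima J lam mu \<longleftrightarrow> (\<exists>x\<in>S_LP J lam mu. \<exists>y\<in>S_LP J lam mu. x \<noteq> y)"
  by (auto simp: lp_multiple_optima_def lp_optimal_iff S_LP_eq)

lemma S_LP_nonempty: obtains xi where "xi \<in> S_LP J lam mu"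
  using opt_val by (auto simp: S_LP_def)

lemma fully_loaded_solution:
  obtains xi where "lp_feasible J lam mu xi 1" "\<forall>i. Rxi J mu xi i = lam i" "\<forall>k. Gxi J xi k = 1"
proof -
  obtain xi where xi: "xi \<in> S_LP J lam mu"
    by (rule S_LP_nonempty)
  then have "lp_feasible J lam mu xi 1" "\<forall>k. Gxi J xi k = 1"
    using full_load by (auto simp: S_LP_eq)
  then show ?thesis
    by (intro that) (simp_all add: lp_feasible_def)
qed

lemma S_LP_diff_kernel:
  assumes "x \<in> S_LP J lam mu" "y \<in> S_LP J lam mu"
  shows "constraint_kernel J mu (x - y)"
proof -
  have "\<forall>k. Gxi J x k = 1" "\<forall>k. Gxi J y k = 1"
    using assms full_load by blast+
  moreover have "lp_feasible J lam mu x 1" "lp_feasible J lam mu y 1"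
    using assms by (simp_all add: S_LP_eq)
  ultimately show ?thesis
    by (simp add: lp_feasible_def constraint_kernel_def Rxi_diff Gxi_diff)
qed

lemma dual_optimal_if_tight:
  assumes "dual_tight J mu y z" "\<forall>k. 0 \<le> z k" "(\<Sum>k\<in>UNIV. z k) = 1"
  shows "dual_optimal J lam mu y z"
proof -
  obtain xi where xi: "lp_feasible J lam mu xi 1" "\<forall>i. Rxi J mu xi i = lam i" "\<forall>k. Gxi J xi k = 1"
    by (rule fully_loaded_solution)
  have "(\<Sum>i\<in>UNIV. y i * lam i) = 1"
    using dual_value_if_tight[OF xi(2,3) assms(1)] assms(3) by simp
  moreover have "dual_feasible J mu y z"
    using assms by (rule dual_feasible_if_tight)
  ultimately show ?thesis
    using weak_duality[OF xi(1)] unfolding dual_optimal_def by simp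
qed

lemma dual_optimal_unique:
  "dual_optimal J lam mu y z \<Longrightarrow> dual_optimal J lam mu y' z' \<Longrightarrow> y = y' \<and> z = z'"
  using dual_unique by (metis fst_conv snd_conv)

lemma dual_optimal_positive_part:
  assumes "dual_tight J mu y z" and c: "c = (\<Sum>k\<in>UNIV. max 0 (z k))" "0 < c"
  shows "dual_optimal J lam mu (\<lambda>i. max 0 (y i) / c) (\<lambda>k. max 0 (z k) / c)"
proof (rule dual_optimal_if_tight)
  show "dual_tight J mu (\<lambda>i. max 0 (y i) / c) (\<lambda>k. max 0 (z k) / c)"
    using dual_tight_positive_part mu_pos assms(1) by blast
  show "\<forall>k. 0 \<le> max 0 (z k) / c"
    using c by simp
  show "(\<Sum>k\<in>UNIV. max 0 (z k) / c) = 1"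
    using c by (simp flip: sum_divide_distrib)
qed

lemma decomposable_sum_lam_div:
  assumes "decomposable J mu alpha beta"
  shows "(\<Sum>i\<in>UNIV. lam i / alpha i) = (\<Sum>k\<in>UNIV. beta k)"
proof -
  obtain xi where "\<forall>i. Rxi J mu xi i = lam i" "\<forall>k. Gxi J xi k = 1"
    by (rule fully_loaded_solution)
  from dual_value_if_tight[OF this decomposable_dual_tight[OF mu_pos assms]]
  show ?thesis
    by simp
qed

lemma decomposable_nonneg:
  assumes dec: "decomposable J mu alpha beta"
  shows "0 \<le> beta k"
proof (rule ccontr)
  assume "\<not> 0 \<le> beta k"
  define P where "P = (\<Sum>k\<in>UNIV. max 0 (beta k))"
  define N where "N = (\<Sum>k\<in>UNIV. max 0 (- beta k))"
  have "0 < max 0 (- beta k)"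
    using \<open>\<not> 0 \<le> beta k\<close> by simp
  also have "\<dots> \<le> N"
    unfolding N_def by (rule member_le_sum) auto
  finally have N: "0 < N" .
  have "P - N = (\<Sum>k\<in>UNIV. beta k)"
    unfolding P_def N_def sum_subtractf[symmetric] by (rule sum.cong) (auto simp: max_def)
  with dec N have P: "0 < P"
    by (simp add: decomposable_def)
  have tight: "dual_tight J mu (\<lambda>i. 1 / alpha i) beta"
    by (rule decomposable_dual_tight[OF mu_pos dec])
  then have "dual_tight J mu (\<lambda>i. - (1 / alpha i)) (\<lambda>k. - beta k)"
    by (simp add: dual_tight_def)
  then have "(\<lambda>k. max 0 (beta k) / P) = (\<lambda>k. max 0 (- beta k) / N)"
    using dual_optimal_unique dual_optimal_positive_part[OF tight P_def P]
      dual_optimal_positive_part[OF _ N_def N] by blast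
  then have "max 0 (beta k) / P = max 0 (- beta k) / N"
    by (rule fun_cong)
  then show False
    using \<open>\<not> 0 \<le> beta k\<close> N by simp
qed

lemma decomposable_dual_optimum:
  assumes dec: "decomposable J mu alpha beta" and opt: "dual_optimal J lam mu y z"
  shows "y = (\<lambda>i. 1 / alpha i) \<and> z = beta"
proof -
  have "dual_optimal J lam mu (\<lambda>i. 1 / alpha i) beta"
    using decomposable_dual_tight[OF mu_pos dec] decomposable_nonneg[OF dec] dec
    by (intro dual_optimal_if_tight) (auto simp: decomposable_def)
  then show ?thesis
    using dual_optimal_unique opt by blast
qed

lemma decomposable_multiple_optima:
  assumes dec: "decomposable J mu alpha beta" and J: "J = UNIV"
    and "2 \<le> CARD('i)" "2 \<le> CARD('k)"
  shows "lp_multiple_optima J lam mu"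
proof -
  obtain i1 i2 :: 'i where i12: "i1 \<noteq> i2"
    using obtain_two_distinct \<open>2 \<le> CARD('i)\<close> .
  obtain k1 k2 :: 'k where k12: "k1 \<noteq> k2"
    using obtain_two_distinct \<open>2 \<le> CARD('k)\<close> .
  have mu: "mu (i, k) = alpha i * beta k" "0 < mu (i, k)" for i k
    using dec mu_pos J by (auto simp: decomposable_def)
  have beta_pos: "0 < beta k" for k
    using mu[of i1 k] decomposable_nonneg[OF dec, of k] by (auto simp: less_le)
  have alpha_pos: "0 < alpha i" for i
    using mu[of i k1] beta_pos[of k1] by (simp add: zero_less_mult_iff)
  define x :: "real ^ ('i \<times> 'k)" where "x = (\<chi> j. lam (fst j) / alpha (fst j))"
  define s where "s i = (if i = i1 then 1 else 0) - (if i = i2 then 1 else (0::real))" for i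
  define t where "t k = (if k = k1 then 1 else 0) - (if k = k2 then 1 else (0::real))" for k
  define d :: "real ^ ('i \<times> 'k)" where "d = (\<chi> j. s (fst j) * t (snd j) / beta (snd j))"
  have x: "lp_feasible J lam mu x 1"
    unfolding x_def J
  proof (rule decomposable_product_form_feasible)
    show "decomposable UNIV mu alpha beta"
      using dec J by simp
    show "\<forall>i. alpha i \<noteq> 0" "\<forall>i. 0 \<le> lam i / alpha i"
      using alpha_pos lam_pos by (auto simp: less_imp_le less_imp_neq[symmetric])
    show "(\<Sum>i\<in>UNIV. lam i / alpha i) = 1"
      using decomposable_sum_lam_div[OF dec] dec by (simp add: decomposable_def)
  qed
  have d: "constraint_kernel J mu d"
    unfolding d_def J using dec beta_pos J
    by (intro decomposable_kernel_direction) (auto simp: s_def t_def sum_subtractf less_imp_neq[symmetric])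
  obtain \<epsilon> where "0 < \<epsilon>" and nonneg: "\<forall>j. 0 \<le> x $ j + \<epsilon> * d $ j"
    using exists_pos_perturbation_nonneg[of "\<lambda>j. x $ j" "\<lambda>j. d $ j"] alpha_pos lam_pos
    by (auto simp: x_def)
  have "lp_feasible J lam mu (x + \<epsilon> *\<^sub>R d) 1"
    by (intro lp_feasible_add_kernel x constraint_kernel_scaleR d) (simp add: nonneg)
  moreover have "x + \<epsilon> *\<^sub>R d \<noteq> x"
    using \<open>0 < \<epsilon>\<close> beta_pos[of k1] i12 k12 by (auto simp: vec_eq_iff d_def s_def t_def)
  ultimately show ?thesis
    unfolding lp_multiple_optima_iff S_LP_eq using x by blast
qed

lemma two_by_two_multiple_optima_iff:
  assumes "CARD('i) = 2" "CARD('k) = 2" and J: "J = UNIV"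
  shows "lp_multiple_optima J lam mu \<longleftrightarrow> (\<exists>alpha beta. decomposable J mu alpha beta)"
proof -
  obtain i1 i2 :: 'i where I: "UNIV = {i1, i2}" "i1 \<noteq> i2"
    using \<open>CARD('i) = 2\<close> card_2_iff by metis
  obtain k1 k2 :: 'k where K: "UNIV = {k1, k2}" "k1 \<noteq> k2"
    using \<open>CARD('k) = 2\<close> card_2_iff by metis
  show ?thesis
  proof
    assume "lp_multiple_optima J lam mu"
    then obtain x y where "x \<in> S_LP J lam mu" "y \<in> S_LP J lam mu" "x - y \<noteq> 0"
      by (auto simp: lp_multiple_optima_iff)
    then have "mu (i1, k1) * mu (i2, k2) = mu (i1, k2) * mu (i2, k1)"
      using constraint_kernel_2x2(2)[OF I K _ S_LP_diff_kernel[unfolded J]] mu_pos J by simp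
    then show "\<exists>alpha beta. decomposable J mu alpha beta"
      using decomposable_2x2[OF I(1) K] mu_pos J by auto
  next
    assume "\<exists>alpha beta. decomposable J mu alpha beta"
    then show "lp_multiple_optima J lam mu"
      using decomposable_multiple_optima J assms by force
  qed
qed

lemma two_by_two_S_LP_on_line:
  assumes I: "UNIV = {i1 :: 'i, i2}" "i1 \<noteq> i2" and K: "UNIV = {k1 :: 'k, k2}" "k1 \<noteq> k2"
    and J: "J = UNIV"
  obtains p d where "S_LP J lam mu \<subseteq> range (\<lambda>t. p + t *\<^sub>R d)"
proof (cases "\<exists>u\<in>S_LP J lam mu. \<exists>v\<in>S_LP J lam mu. u \<noteq> v")
  case True
  then obtain u v where u: "u \<in> S_LP J lam mu" and v: "v \<in> S_LP J lam mu" and "u \<noteq> v"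
    by blast
  have kernel: "constraint_kernel UNIV mu (y - u)" if "y \<in> S_LP J lam mu" for y
    using S_LP_diff_kernel[OF that u] J by simp
  have "v - u \<noteq> 0"
    using \<open>u \<noteq> v\<close> by simp
  then have uv: "v $ (i1, k1) \<noteq> u $ (i1, k1)"
    using constraint_kernel_2x2(1)[OF I K _ kernel[OF v]] mu_pos J by auto
  have "y \<in> range (\<lambda>t. u + t *\<^sub>R (v - u))" if y: "y \<in> S_LP J lam mu" for y
  proof -
    define t where "t = (y $ (i1, k1) - u $ (i1, k1)) / (v $ (i1, k1) - u $ (i1, k1))"
    have "constraint_kernel UNIV mu ((y - u) - t *\<^sub>R (v - u))"
      by (intro constraint_kernel_diff constraint_kernel_scaleR kernel y v)
    moreover have "((y - u) - t *\<^sub>R (v - u)) $ (i1, k1) = 0"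
      using uv by (simp add: t_def)
    ultimately have "(y - u) - t *\<^sub>R (v - u) = 0"
      using constraint_kernel_2x2(1)[OF I K] mu_pos J by (metis UNIV_I)
    then have "y = u + t *\<^sub>R (v - u)"
      by (simp add: algebra_simps)
    then show ?thesis
      by (rule image_eqI) simp
  qed
  then show ?thesis
    using that by blast
next
  case False
  obtain u where "u \<in> S_LP J lam mu"
    by (rule S_LP_nonempty)
  with False have "S_LP J lam mu \<subseteq> range (\<lambda>t. u + t *\<^sub>R 0)"
    by auto
  then show ?thesis
    by (rule that)
qed

lemma two_by_two_extreme_points:
  assumes "CARD('i) = 2" "CARD('k) = 2" and J: "J = UNIV"
  shows "finite {xi. xi extreme_point_of S_LP J lam mu} \<and> card {xi. xi extreme_point_of S_LP J lam mu} \<le> 2"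
proof -
  obtain i1 i2 :: 'i where I: "UNIV = {i1, i2}" "i1 \<noteq> i2"
    using \<open>CARD('i) = 2\<close> card_2_iff by metis
  obtain k1 k2 :: 'k where K: "UNIV = {k1, k2}" "k1 \<noteq> k2"
    using \<open>CARD('k) = 2\<close> card_2_iff by metis
  obtain p d where "S_LP J lam mu \<subseteq> range (\<lambda>t. p + t *\<^sub>R d)"
    using two_by_two_S_LP_on_line[OF I K J] .
  then show ?thesis
    by (rule extreme_points_on_line)
qed

end

theorem lemma2p4:
  fixes J :: "('i::finite \<times> 'k::finite) set"
    and lam :: "'i \<Rightarrow> real" and mu :: "'i \<times> 'k \<Rightarrow> real"
  assumes lam_pos: "\<forall>i. 0 < lam i"
    and mu_pos: "\<forall>j\<in>J. 0 < mu j"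
    and opt_val: "\<exists>xi. lp_optimal J lam mu xi 1"
    and full_load: "\<forall>xi\<in>S_LP J lam mu. \<forall>k. Gxi J xi k = 1"
    and dual_unique: "\<exists>!yz. dual_optimal J lam mu (fst yz) (snd yz)"
    and ystar_zstar: "dual_optimal J lam mu ystar zstar"
  shows
    "(\<forall>alpha beta. decomposable J mu alpha beta \<longrightarrow>
        (\<Sum>i\<in>UNIV. lam i / alpha i) = (\<Sum>k\<in>UNIV. beta k) \<and> (\<Sum>k\<in>UNIV. beta k) = 1)
   \<and> (\<forall>alpha beta. decomposable J mu alpha beta \<longrightarrow>
        ystar = (\<lambda>i. 1 / alpha i) \<and> zstar = beta)
   \<and> (\<forall>alpha beta. decomposable J mu alpha beta \<and> J = UNIV \<and>
        2 \<le> CARD('i) \<and> 2 \<le> CARD('k) \<longrightarrow> lp_multiple_optima J lam mu)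
   \<and> (CARD('i) = 2 \<and> CARD('k) = 2 \<and> J = UNIV \<longrightarrow>
        (lp_multiple_optima J lam mu \<longleftrightarrow> (\<exists>alpha beta. decomposable J mu alpha beta)) \<and>
        finite {xi. xi extreme_point_of S_LP J lam mu} \<and>
        card {xi. xi extreme_point_of S_LP J lam mu} \<le> 2)"
proof -
  interpret standing_assumption J lam mu
    using assms by unfold_locales
  have "(\<Sum>i\<in>UNIV. lam i / alpha i) = (\<Sum>k\<in>UNIV. beta k) \<and> (\<Sum>k\<in>UNIV. beta k) = 1"
    if "decomposable J mu alpha beta" for alpha beta
    using decomposable_sum_lam_div[OF that] that by (simp add: decomposable_def)
  then show ?thesis
    using decomposable_dual_optimum[OF _ ystar_zstar] decomposable_multiple_optima
      two_by_two_multiple_optima_iff two_by_two_extreme_points by blast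
qed

end
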